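(* Let $F$ be an isonemal periodic fabric of order greater than $4$ whose symmetry group contains a quarter-turn symmetry (with or without side reversal), and suppose $F$ is perfectly coloured by thin striping. Then the resulting pattern, regarded as a design, is not the design of an isonemal prefabric that falls apart.
   Context: The plane is divided into unit square cells by a square grid. A prefabric consists of vertical strands (warps, columns of cells) and horizontal strands (wefts, rows of cells), with a specification in every cell of which strand is uppermost when viewed from the obverse. Its design colours a cell dark if the warp is uppermost and pale if the weft is uppermost; any dark/pale colouring of the cells, regarded as a design, determines a prefabric. A prefabric is periodic if invariant under two linearly independent translations; its order is the period of the up/down sequence along a strand. A symmetry is an isometry of the plane preserving the grid and the prefabric, possibly composed with side reversal $\tau$ (reflection in the plane of the prefabric, interchanging which strand is uppermost in every cell). The symmetry group is $G_1$; the prefabric is isonemal if $G_1$ is transitive on the set of all strands. A fabric is a prefabric that does not fall apart, where a prefabric falls apart if some nonempty proper subset $S$ of the strands is uppermost at every crossing of a strand of $S$ with a strand outside $S$. Thin striping colours warps alternately dark and pale and wefts alternately dark and pale (two possible choices); the pattern colours each cell with the colour of the strand uppermost there. The colouring is perfect if every symmetry in $G_1$ maps all dark strands to dark strands and all pale strands to pale strands, or interchanges the two colour classes of strands. *)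

theory Defs
  imports Main
begin

text \<open>Cells of the grid are indexed by pairs (i,j) of integers: i is the column
 (the warp through the cell), j the row (the weft through the cell).
 A prefabric (equivalently its design) is a function D on cells:
 D c = True means dark, i.e. the warp is uppermost at c;
 D c = False means pale, i.e. the weft is uppermost at c.\<close>

type_synonym cell = "int \<times> int"
type_synonym design = "cell \<Rightarrow> bool"

datatype strand = Warp int | Weft int

definition upper :: "design \<Rightarrow> cell \<Rightarrow> strand" where
  "upper D c = (if D c then Warp (fst c) else Weft (snd c))"

definition lower :: "design \<Rightarrow> cell \<Rightarrow> strand" where
  "lower D c = (if D c then Weft (snd c) else Warp (fst c))"

text \<open>Isometries of the plane preserving the grid, possibly composed with side
 reversal tau. Such an isometry acts on cell indices as
 (i,j) |-> (m11 i + m12 j + t1, m21 i + m22 j + t2) with the linear part a signed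
 permutation matrix (one of the 8 elements of the dihedral group of the square)
 and integer translation part; every such map arises from exactly one grid
 preserving isometry.\<close>

record gsym =
  m11 :: int
  m12 :: int
  m21 :: int
  m22 :: int
  t1 :: int
  t2 :: int
  rev :: bool

definition grid_iso :: "gsym \<Rightarrow> bool" where
  "grid_iso g \<longleftrightarrow>
     (m12 g = 0 \<and> m21 g = 0 \<and> \<bar>m11 g\<bar> = 1 \<and> \<bar>m22 g\<bar> = 1) \<or>
     (m11 g = 0 \<and> m22 g = 0 \<and> \<bar>m12 g\<bar> = 1 \<and> \<bar>m21 g\<bar> = 1)"

definition cellmap :: "gsym \<Rightarrow> cell \<Rightarrow> cell" where
  "cellmap g c = (m11 g * fst c + m12 g * snd c + t1 g, m21 g * fst c + m22 g * snd c + t2 g)"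

fun strandmap :: "gsym \<Rightarrow> strand \<Rightarrow> strand" where
  "strandmap g (Warp i) = (if m11 g = 0 then Weft (m21 g * i + t2 g) else Warp (m11 g * i + t1 g))"
| "strandmap g (Weft j) = (if m11 g = 0 then Warp (m12 g * j + t1 g) else Weft (m22 g * j + t2 g))"

text \<open>g is a symmetry of the prefabric D: at every cell c, the strand that is
 uppermost at c (or, if side reversal is involved, the strand that is lowermost,
 i.e. uppermost on the reverse) is mapped to the strand uppermost at the image cell.\<close>
definition is_sym :: "design \<Rightarrow> gsym \<Rightarrow> bool" where
  "is_sym D g \<longleftrightarrow> grid_iso g \<and>
     (\<forall>c. strandmap g (if rev g then lower D c else upper D c) = upper D (cellmap g c))"

definition G1 :: "design \<Rightarrow> gsym set" where
  "G1 D = {g. is_sym D g}"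

definition isonemal :: "design \<Rightarrow> bool" where
  "isonemal D \<longleftrightarrow> (\<forall>s s'. \<exists>g\<in>G1 D. strandmap g s = s')"

text \<open>Quarter turn: rotation by +-90 degrees (linear part of determinant 1 that
 interchanges the axes), with or without side reversal.\<close>
definition quarter_turn :: "gsym \<Rightarrow> bool" where
  "quarter_turn g \<longleftrightarrow> grid_iso g \<and> m11 g = 0 \<and> m22 g = 0 \<and> m12 g * m21 g = -1"

definition periodic :: "design \<Rightarrow> bool" where
  "periodic D \<longleftrightarrow> (\<exists>a b c d :: int. a * d - b * c \<noteq> 0 \<and>
      (\<forall>i j. D (i + a, j + b) = D (i, j)) \<and> (\<forall>i j. D (i + c, j + d) = D (i, j)))"

text \<open>Up/down sequence along a strand (True = strand is up).\<close>
fun updown :: "design \<Rightarrow> strand \<Rightarrow> int \<Rightarrow> bool" where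
  "updown D (Warp i) k = D (i, k)"
| "updown D (Weft j) k = (\<not> D (k, j))"

definition strand_period :: "design \<Rightarrow> strand \<Rightarrow> nat" where
  "strand_period D s = (LEAST p::nat. p > 0 \<and> (\<forall>k. updown D s (k + int p) = updown D s k))"

definition has_order :: "design \<Rightarrow> nat \<Rightarrow> bool" where
  "has_order D n \<longleftrightarrow> (\<forall>s. strand_period D s = n)"

fun is_warp :: "strand \<Rightarrow> bool" where
  "is_warp (Warp _) = True" | "is_warp (Weft _) = False"

definition falls_apart :: "design \<Rightarrow> bool" where
  "falls_apart D \<longleftrightarrow> (\<exists>S :: strand set. S \<noteq> {} \<and> S \<noteq> UNIV \<and>
     (\<forall>i j. (Warp i \<in> S \<and> Weft j \<notin> S \<longrightarrow> D (i, j)) \<and>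
            (Weft j \<in> S \<and> Warp i \<notin> S \<longrightarrow> \<not> D (i, j))))"

definition fabric :: "design \<Rightarrow> bool" where
  "fabric D \<longleftrightarrow> \<not> falls_apart D"

definition thin_striping :: "(strand \<Rightarrow> bool) \<Rightarrow> bool" where
  "thin_striping col \<longleftrightarrow> (\<exists>p q. (\<forall>i. col (Warp i) = (even i \<longleftrightarrow> p)) \<and>
                                  (\<forall>j. col (Weft j) = (even j \<longleftrightarrow> q)))"

definition pattern :: "design \<Rightarrow> (strand \<Rightarrow> bool) \<Rightarrow> design" where
  "pattern D col = (\<lambda>c. col (upper D c))"

definition perfect :: "design \<Rightarrow> (strand \<Rightarrow> bool) \<Rightarrow> bool" where
  "perfect D col \<longleftrightarrow> (\<forall>g\<in>G1 D. (\<forall>s. col (strandmap g s) = col s) \<or>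
                                  (\<forall>s. col (strandmap g s) = (\<not> col s)))"

end

theory Submission
  imports Defs
begin

text \<open>Perfectness makes every symmetry translate by amounts of equal parity in both
  directions; applied to the translation by the order \<open>n\<close> this gives \<open>n\<close> even, and applied
  to the quarter turn it gives a centre cell \<open>(i0, j0)\<close>, at which the quarter turn must reverse
  sides. A symmetry moving warp \<open>i0\<close> to warp \<open>i0 + 1\<close>, composed if necessary with the half turn
  about the centre, is either a glide reflection, giving the horizontal period 2, or a shift by
  \<open>(\<plusminus>1, b)\<close> with \<open>b\<close> odd, which together with its quarter-turned image gives a vertical period
  \<open>1 + b\<^sup>2 \<equiv> 2 (mod 4)\<close>. Hence \<open>n \<equiv> 2 (mod 4)\<close>, and a parity count of dark cells of the
  pattern along warp \<open>i0\<close> and weft \<open>j0\<close> shows that no symmetry of the pattern carries one to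
  the other. So the pattern is not even isonemal.\<close>

lemma periodic_add_mult:
  fixes f :: "int \<Rightarrow> 'a"
  assumes "\<forall>k. f (k + c) = f k"
  shows "f (x + q * c) = f x"
proof (induct q arbitrary: x rule: int_induct[where k = 0])
  case base then show ?case by simp
next
  case (step1 i)
  have "f (x + (i + 1) * c) = f ((x + i * c) + c)" by (simp add: algebra_simps)
  then show ?case using step1 assms by simp
next
  case (step2 i)
  have "f (x + i * c) = f ((x + (i - 1) * c) + c)" by (simp add: algebra_simps)
  then show ?case using step2 assms by simp
qed

lemma periodic_mod:
  fixes f :: "int \<Rightarrow> 'a"
  assumes "\<forall>k. f (k + c) = f k"
  shows "f (x mod c) = f x"
  using periodic_add_mult[OF assms, of "x mod c" "x div c"] by simp

lemma least_period:
  fixes f :: "int \<Rightarrow> 'a"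
  assumes ex: "\<exists>p::nat. p > 0 \<and> (\<forall>k. f (k + int p) = f k)"
    and n: "n = (LEAST p::nat. p > 0 \<and> (\<forall>k. f (k + int p) = f k))"
  shows "n > 0" "\<forall>k. f (k + int n) = f k" "\<forall>k. f (k + L) = f k \<Longrightarrow> int n dvd L"
proof -
  have P: "n > 0 \<and> (\<forall>k. f (k + int n) = f k)" unfolding n using LeastI_ex[OF ex] .
  then show "n > 0" "\<forall>k. f (k + int n) = f k" by auto
  assume L: "\<forall>k. f (k + L) = f k"
  define r where "r = L mod int n"
  have r: "0 \<le> r" "r < int n" using P unfolding r_def by auto
  have per: "\<forall>k. f (k + r) = f k"
  proof
    fix k
    have "f (k + L) = f (k + r + (L div int n) * int n)"
      unfolding r_def by (metis add.assoc mod_div_mult_eq)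
    also have "\<dots> = f (k + r)" using periodic_add_mult P by blast
    finally show "f (k + r) = f k" using L by simp
  qed
  show "int n dvd L"
  proof (rule ccontr)
    assume "\<not> int n dvd L"
    then have "nat r > 0 \<and> (\<forall>k. f (k + int (nat r)) = f k)"
      using r per unfolding r_def by (simp add: dvd_eq_mod_eq_0 order_le_less)
    then have "n \<le> nat r" unfolding n by (rule Least_le)
    then show False using r by linarith
  qed
qed

lemma flip_translation_iterate:
  fixes D :: design
  assumes "\<forall>x y. D (x + a, y + b) = (D (x, y) \<noteq> \<epsilon>)"
  shows "D (x + q * a, y + q * b) = (D (x, y) \<noteq> (\<epsilon> \<and> odd q))"
proof (induct q arbitrary: x y rule: int_induct[where k = 0])
  case base then show ?case by simp
next
  case (step1 i)
  have "D (x + (i + 1) * a, y + (i + 1) * b) = D ((x + i * a) + a, (y + i * b) + b)"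
    by (simp add: algebra_simps)
  then show ?case using step1 assms by auto
next
  case (step2 i)
  have "D (x + i * a, y + i * b) = D ((x + (i - 1) * a) + a, (y + (i - 1) * b) + b)"
    by (simp add: algebra_simps)
  then show ?case using step2 assms by auto
qed

lemma periodic_axis_period:
  assumes "periodic D"
  obtains L where "L \<noteq> 0" "\<And>i j. D (i, j + L) = D (i, j)" "\<And>i j. D (i + L, j) = D (i, j)"
proof -
  from assms obtain a b c d where det: "a * d - b * c \<noteq> 0"
    and pa: "\<forall>i j. D (i + a, j + b) = (D (i, j) \<noteq> False)"
    and pc: "\<forall>i j. D (i + c, j + d) = (D (i, j) \<noteq> False)"
    unfolding periodic_def by auto
  have "D (i, j + (a * d - b * c)) = D (i, j)" for i j
  proof -
    have "D (i, j + (a * d - b * c)) = D ((i + a * c) + (- c) * a, (j + a * d) + (- c) * b)"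
      by (simp add: algebra_simps)
    also have "\<dots> = D (i + a * c, j + a * d)"
      using flip_translation_iterate[OF pa, of "i + a * c" "- c" "j + a * d"] by simp
    also have "\<dots> = D (i, j)" using flip_translation_iterate[OF pc, of i a j] by (simp add: mult.commute)
    finally show ?thesis .
  qed
  moreover have "D (i + (a * d - b * c), j) = D (i, j)" for i j
  proof -
    have "D (i + (a * d - b * c), j) = D ((i + d * a) + (- b) * c, (j + d * b) + (- b) * d)"
      by (simp add: algebra_simps)
    also have "\<dots> = D (i + d * a, j + d * b)"
      using flip_translation_iterate[OF pc, of "i + d * a" "- b" "j + d * b"] by simp
    also have "\<dots> = D (i, j)" using flip_translation_iterate[OF pa, of i d j] by simp
    finally show ?thesis .
  qed
  ultimately show thesis using det that by blast
qed

lemma has_order_updown: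
  assumes "periodic D" "has_order D n"
  shows "n > 0" "updown D s (k + int n) = updown D s k"
    "\<forall>k. updown D s (k + L) = updown D s k \<Longrightarrow> int n dvd L"
proof -
  obtain P where P: "P \<noteq> 0" "\<And>i j. D (i, j + P) = D (i, j)" "\<And>i j. D (i + P, j) = D (i, j)"
    using periodic_axis_period[OF assms(1)] by blast
  have "\<forall>k. updown D s (k + P) = updown D s k"
    using P by (cases s) simp_all
  then have "\<forall>k. updown D s (k + int (nat (P * P))) = updown D s k"
    using periodic_add_mult[of "updown D s" P _ P] by simp
  moreover have "nat (P * P) > 0" using P(1) by (auto simp: zero_less_mult_iff)
  ultimately have ex: "\<exists>p::nat. p > 0 \<and> (\<forall>k. updown D s (k + int p) = updown D s k)" by blast
  have n: "n = (LEAST p::nat. p > 0 \<and> (\<forall>k. updown D s (k + int p) = updown D s k))"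
    using assms(2) unfolding has_order_def strand_period_def by metis
  show "n > 0" "updown D s (k + int n) = updown D s k"
    "\<forall>k. updown D s (k + L) = updown D s k \<Longrightarrow> int n dvd L"
    using least_period[OF ex n] by blast+
qed

lemma is_sym_cellmap:
  assumes "is_sym D g"
  shows "D (cellmap g c) = (D c = (rev g = (m11 g = 0)))"
proof -
  from assms have "strandmap g (if rev g then lower D c else upper D c) = upper D (cellmap g c)"
    unfolding is_sym_def by blast
  then show ?thesis
    by (cases c) (auto simp: upper_def lower_def split: if_splits)
qed

lemma perfect_colour_flip:
  assumes "perfect D col" "g \<in> G1 D"
  obtains E where "\<forall>s. col (strandmap g s) = (col s \<noteq> E)"
  using assms unfolding perfect_def by (metis (full_types))

lemma thin_striping_translation_parity:
  assumes "thin_striping col" "\<forall>s. col (strandmap g s) = (col s \<noteq> E)"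
  shows "even (t1 g) = even (t2 g)"
proof -
  from assms(1) obtain p q where cw: "\<And>i. col (Warp i) = (even i = p)"
    and cf: "\<And>j. col (Weft j) = (even j = q)"
    unfolding thin_striping_def by blast
  have "col (strandmap g (Warp 0)) = (col (Warp 0) \<noteq> E)"
    "col (strandmap g (Weft 0)) = (col (Weft 0) \<noteq> E)"
    using assms(2) by blast+
  then show ?thesis
    using cw cf by (cases "m11 g = 0"; cases E; cases p; cases q; simp)
qed

lemma order_even:
  assumes "periodic D" "has_order D n" "thin_striping col" "perfect D col"
  shows "even n"
proof -
  define tr where "tr = \<lparr>m11 = 1, m12 = 0, m21 = 0, m22 = 1, t1 = int n, t2 = 0, rev = False\<rparr>"
  have "D (i + int n, j) = D (i, j)" for i j
    using has_order_updown(2)[OF assms(1,2), of "Weft j" i] by simp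
  then have "tr \<in> G1 D"
    by (auto simp: G1_def is_sym_def grid_iso_def tr_def cellmap_def upper_def add.commute)
  then obtain E where "\<forall>s. col (strandmap tr s) = (col s \<noteq> E)"
    using perfect_colour_flip[OF assms(4)] by blast
  from thin_striping_translation_parity[OF assms(3) this] show ?thesis
    by (simp add: tr_def)
qed

text \<open>The parity condition is what puts the centre of the quarter turn at a cell rather than
  at a grid vertex.\<close>
lemma quarter_turn_centre:
  assumes "quarter_turn g" "even (t1 g) = even (t2 g)"
  obtains e i0 j0 where "e = 1 \<or> e = -1"
    "\<And>i j. cellmap g (i, j) = (i0 - e * (j - j0), j0 + e * (i - i0))"
    "\<And>i. strandmap g (Warp i) = Weft (j0 + e * (i - i0))"
    "\<And>j. strandmap g (Weft j) = Warp (i0 - e * (j - j0))"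
proof -
  define e where "e = m21 g"
  have g: "m11 g = 0" "m22 g = 0" "m12 g * e = -1"
    using assms(1) by (auto simp: quarter_turn_def e_def)
  then have e: "e = 1 \<or> e = -1" and m12: "m12 g = - e"
    unfolding zmult_eq_neg1_iff by auto
  define j0 where "j0 = (e * t1 g + t2 g) div 2"
  define i0 where "i0 = t1 g - e * j0"
  have "even (e * t1 g + t2 g)" using e assms(2) by auto
  then have j0: "2 * j0 = e * t1 g + t2 g" unfolding j0_def by simp
  have x: "t1 g - e * j = i0 - e * (j - j0)" for j
    by (simp add: i0_def algebra_simps)
  have y: "e * i + t2 g = j0 + e * (i - i0)" for i
    using e j0 by (elim disjE) (simp_all add: i0_def algebra_simps)
  show thesis
    by (rule that[of e i0 j0]) (simp_all add: e cellmap_def g m12 e_def[symmetric] x y)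
qed

lemma quarter_turn_sym_design:
  assumes "is_sym D g" "quarter_turn g"
    and cell: "\<And>i j. cellmap g (i, j) = (i0 - e * (j - j0), j0 + e * (i - i0))"
  shows "D (i0 - e * (j - j0), j0 + e * (i - i0)) = D (i, j)"
proof -
  have "m11 g = 0" using assms(2) by (simp add: quarter_turn_def)
  then have sym: "D (cellmap g c) = (D c = rev g)" for c
    using is_sym_cellmap[OF assms(1)] by simp
  \<comment> \<open>At the fixed centre this reads \<open>D c = (D c = rev g)\<close>, so the quarter turn reverses sides.\<close>
  have "rev g" using sym[of "(i0, j0)"] cell[of i0 j0] by (cases "rev g") auto
  then show ?thesis using sym[of "(i, j)"] cell[of i j] by simp
qed

lemma rotation_half_turn:
  fixes D :: design
  assumes e: "e = 1 \<or> e = -1"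
    and rot: "\<And>i j. D (i0 - e * (j - j0), j0 + e * (i - i0)) = D (i, j)"
  shows "D (2 * i0 - i, 2 * j0 - j) = D (i, j)"
proof -
  have "D (2 * i0 - i, 2 * j0 - j)
      = D (i0 - e * ((j0 + e * (i - i0)) - j0), j0 + e * ((i0 - e * (j - j0)) - i0))"
    using e by (elim disjE) (simp_all add: algebra_simps)
  also have "\<dots> = D (i0 - e * (j - j0), j0 + e * (i - i0))" by (rule rot)
  also have "\<dots> = D (i, j)" by (rule rot)
  finally show ?thesis .
qed

lemma flip_glide_period:
  fixes D :: design
  assumes "\<forall>x y. D (x + a, - y + b) = (D (x, y) \<noteq> \<epsilon>)"
  shows "D (x + 2 * a, y) = D (x, y)"
proof -
  have "D ((x + a) + a, - (- y + b) + b) = (D (x + a, - y + b) \<noteq> \<epsilon>)" using assms by blast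
  also have "\<dots> = D (x, y)" using assms by (cases \<epsilon>) auto
  finally show ?thesis by (simp add: algebra_simps)
qed

text \<open>A shift with side reversal and its image under the quarter turn combine, with odd
  coefficients so that the two reversals cancel, into a vertical translation.\<close>
lemma flip_translation_rotation_period:
  fixes D :: design
  assumes T: "\<forall>x y. D (x + a, y + b) = (D (x, y) \<noteq> \<epsilon>)"
    and rot: "\<And>i j. D (i0 - e * (j - j0), j0 + e * (i - i0)) = D (i, j)"
    and e: "e = 1 \<or> e = -1" and "odd a" "odd b"
  shows "D (x, y + e * (a * a + b * b)) = D (x, y)"
proof -
  have R: "\<forall>X Y. D (X + - e * b, Y + e * a) = (D (X, Y) \<noteq> \<epsilon>)"
  proof (intro allI)
    fix X Y
    define i where "i = i0 + e * (Y - j0)"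
    define j where "j = j0 - e * (X - i0)"
    have XY: "X = i0 - e * (j - j0)" "Y = j0 + e * (i - i0)"
      using e by (auto simp: i_def j_def algebra_simps)
    have "D (X + - e * b, Y + e * a) = D (i0 - e * ((j + b) - j0), j0 + e * ((i + a) - i0))"
      by (simp add: XY algebra_simps)
    also have "\<dots> = D (i + a, j + b)" by (rule rot)
    also have "\<dots> = (D (i, j) \<noteq> \<epsilon>)" using T by blast
    also have "D (i, j) = D (X, Y)" using rot[where i = i and j = j] XY by simp
    finally show "D (X + - e * b, Y + e * a) = (D (X, Y) \<noteq> \<epsilon>)" .
  qed
  have "D (x, y + e * (a * a + b * b))
      = D ((x + (e * b) * a) + a * (- e * b), (y + (e * b) * b) + a * (e * a))"
    by (simp add: algebra_simps)
  also have "\<dots> = (D (x + (e * b) * a, y + (e * b) * b) \<noteq> \<epsilon>)"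
    using flip_translation_iterate[OF R, of "x + (e * b) * a" a "y + (e * b) * b"] \<open>odd a\<close>
    by (simp add: algebra_simps)
  also have "D (x + (e * b) * a, y + (e * b) * b) = (D (x, y) \<noteq> \<epsilon>)"
    using flip_translation_iterate[OF T] \<open>odd b\<close> e by auto
  finally show ?thesis by (cases \<epsilon>) auto
qed

lemma odd_square_sum_not_dvd_4:
  fixes a b :: int
  assumes "odd a" "odd b"
  shows "\<not> 4 dvd a * a + b * b"
proof -
  obtain c d where "a = 2 * c + 1" "b = 2 * d + 1" using assms by (metis oddE)
  then have "a * a + b * b = 4 * (c * c + c + d * d + d) + 2" by (simp add: algebra_simps)
  then show ?thesis by presburger
qed

lemma shift_symmetry:
  assumes "isonemal D" "thin_striping col" "perfect D col"
    and half: "\<And>i j. D (2 * i0 - i, 2 * j0 - j) = D (i, j)"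
  obtains a s b \<epsilon> where "a = 1 \<or> a = -1" "s = 1 \<or> s = -1" "odd b"
    "\<forall>x y. D (x + a, s * y + b) = (D (x, y) \<noteq> \<epsilon>)"
proof -
  obtain k where kG: "k \<in> G1 D" and kw: "strandmap k (Warp i0) = Warp (i0 + 1)"
    using assms(1) unfolding isonemal_def by blast
  have k11: "m11 k \<noteq> 0" using kw by (auto split: if_splits)
  then have kiso: "m12 k = 0" "m21 k = 0" "m11 k = 1 \<or> m11 k = -1" "m22 k = 1 \<or> m22 k = -1"
    using kG unfolding G1_def is_sym_def grid_iso_def by auto
  have t1: "m11 k * i0 + t1 k = i0 + 1" using kw k11 by simp
  have par: "even (t1 k) = even (t2 k)"
    using perfect_colour_flip[OF assms(3) kG] thin_striping_translation_parity[OF assms(2)] by metis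
  have kD: "D (m11 k * x + t1 k, m22 k * y + t2 k) = (D (x, y) \<noteq> rev k)" for x y
    using is_sym_cellmap[of D k "(x, y)"] kG k11 kiso by (auto simp: G1_def cellmap_def)
  from kiso(3) show thesis
  proof
    assume m11: "m11 k = 1"
    show thesis
    proof (rule that[of 1 "m22 k" "t2 k" "rev k"])
      show "odd (t2 k)" using par t1 m11 by simp
      show "\<forall>x y. D (x + 1, m22 k * y + t2 k) = (D (x, y) \<noteq> rev k)"
        using kD m11 t1 by (simp add: add.commute)
    qed (use kiso in auto)
  next
    assume m11: "m11 k = -1"
    \<comment> \<open>Composing the reflection \<open>x \<mapsto> t1 k - x\<close> with the half turn yields a shift by \<open>-1\<close>.\<close>
    show thesis
    proof (rule that[of "-1" "- m22 k" "2 * j0 - t2 k" "rev k"])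
      show "odd (2 * j0 - t2 k)" using par t1 m11 by simp
      show "\<forall>x y. D (x + -1, - m22 k * y + (2 * j0 - t2 k)) = (D (x, y) \<noteq> rev k)"
      proof (intro allI)
        fix x y
        have "D (x + -1, - m22 k * y + (2 * j0 - t2 k))
            = D (2 * i0 - (- x + t1 k), 2 * j0 - (m22 k * y + t2 k))"
          using t1 m11 by (simp add: algebra_simps)
        also have "\<dots> = (D (x, y) \<noteq> rev k)" using half kD[of x y] m11 by simp
        finally show "D (x + -1, - m22 k * y + (2 * j0 - t2 k)) = (D (x, y) \<noteq> rev k)" .
      qed
    qed (use kiso in auto)
  qed
qed

lemma order_not_dvd_4:
  assumes "isonemal D" "periodic D" "has_order D n" "n > 2" "thin_striping col" "perfect D col"
    and e: "e = 1 \<or> e = -1"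
    and rot: "\<And>i j. D (i0 - e * (j - j0), j0 + e * (i - i0)) = D (i, j)"
  shows "\<not> 4 dvd int n"
proof
  assume 4: "4 dvd int n"
  obtain a s b \<epsilon> where a: "a = 1 \<or> a = -1" and s: "s = 1 \<or> s = -1" and b: "odd b"
    and T: "\<forall>x y. D (x + a, s * y + b) = (D (x, y) \<noteq> \<epsilon>)"
    using shift_symmetry[OF assms(1,5,6) rotation_half_turn[OF e rot]] by blast
  from s show False
  proof
    assume "s = 1"
    then have "D (x, y + e * (a * a + b * b)) = D (x, y)" for x y
      using flip_translation_rotation_period[of D a b \<epsilon> i0 e j0] T rot e a b by auto
    then have "int n dvd e * (a * a + b * b)"
      using has_order_updown(3)[OF assms(2,3), of "Warp 0"] by simp
    moreover have "\<not> 4 dvd a * a + b * b"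
      using odd_square_sum_not_dvd_4[of a b] a b by auto
    then have "\<not> 4 dvd e * (a * a + b * b)"
      using e by (elim disjE) (simp_all only: mult_1 mult_minus1 dvd_minus_iff not_False_eq_True)
    ultimately show False using 4 dvd_trans by blast
  next
    assume "s = -1"
    then have "D (x + 2 * a, y) = D (x, y)" for x y
      using flip_glide_period[of D a b \<epsilon>] T by simp
    then have "int n dvd 2 * a"
      using has_order_updown(3)[OF assms(2,3), of "Weft 0"] by simp
    then have "n dvd 2" using a by (auto simp flip: int_dvd_int_iff)
    then show False using assms(4) dvd_imp_le[of n 2] by simp
  qed
qed

definition count_below :: "nat \<Rightarrow> (int \<Rightarrow> bool) \<Rightarrow> int" where
  "count_below n Q = (\<Sum>k<n. if Q (int k) then 1 else 0)"

lemma count_below_xor: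
  assumes "\<And>k. P k = (Q k \<noteq> E)"
  shows "count_below n P = (if E then int n - count_below n Q else count_below n Q)"
proof (cases E)
  case True
  then have "count_below n P = (\<Sum>k<n. 1 - (if Q (int k) then 1 else 0))"
    unfolding count_below_def using assms by (intro sum.cong) auto
  then show ?thesis using True by (simp add: count_below_def sum_subtractf)
next
  case False
  then show ?thesis using assms by (simp add: count_below_def)
qed

lemma count_below_swap:
  "count_below n (\<lambda>k. if d k then a k else b k) + count_below n (\<lambda>k. if d k then b k else a k)
    = count_below n a + count_below n b"
  unfolding count_below_def sum.distrib[symmetric] by (intro sum.cong) auto

lemma count_below_alternating: "count_below (2 * m) (\<lambda>k. even k = q) = int m"
proof (induct m)
  case (Suc m)
  have "2 * Suc m = Suc (Suc (2 * m))" by simp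
  then show ?case using Suc by (simp add: count_below_def)
qed (simp add: count_below_def)

lemma count_below_affine:
  assumes "\<bar>\<sigma>\<bar> = 1" "0 < n" and per: "\<forall>x. Q (x + int n) = Q x"
  shows "count_below n (\<lambda>k. Q (\<sigma> * k + \<tau>)) = count_below n Q"
proof -
  define f where "f k = nat ((\<sigma> * int k + \<tau>) mod int n)" for k
  have "inj_on f {..<n}"
  proof (rule inj_onI)
    fix x y assume "x \<in> {..<n}" "y \<in> {..<n}" "f x = f y"
    then have "(\<sigma> * int x + \<tau>) mod int n = (\<sigma> * int y + \<tau>) mod int n"
      using \<open>0 < n\<close> unfolding f_def by (simp add: eq_nat_nat_iff)
    then have "int n dvd \<sigma> * (int x - int y)"
      by (simp add: mod_eq_dvd_iff algebra_simps)
    then have "int n dvd int x - int y"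
      using assms(1) by (auto simp: abs_if dvd_diff_commute split: if_splits)
    then show "x = y" using \<open>x \<in> {..<n}\<close> \<open>y \<in> {..<n}\<close> by (simp add: mod_eq_dvd_iff[symmetric])
  qed
  moreover have "f k < n" for k unfolding f_def using \<open>0 < n\<close> by (simp add: nat_less_iff)
  ultimately have "bij_betw f {..<n} {..<n}"
    unfolding bij_betw_def by (metis endo_inj_surj finite_lessThan image_subsetI lessThan_iff)
  then have "count_below n Q = (\<Sum>k<n. if Q (int (f k)) then 1 else 0)"
    unfolding count_below_def by (rule sum.reindex_bij_betw[symmetric])
  also have "\<dots> = count_below n (\<lambda>k. Q (\<sigma> * k + \<tau>))"
    unfolding count_below_def f_def using \<open>0 < n\<close> periodic_mod[OF per] by (intro sum.cong) auto
  finally show ?thesis by simp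
qed

text \<open>Count the pattern's dark cells over one period along warp \<open>i0\<close> (\<open>A\<close>) and along weft
  \<open>j0\<close>. A symmetry of the pattern carrying the warp to the weft makes the weft count \<open>A\<close> or
  \<open>n - A\<close>; the quarter turn of \<open>D\<close> makes it \<open>A'\<close> or \<open>n - A'\<close>, where \<open>A'\<close> counts dark lower
  strands along warp \<open>i0\<close>. So \<open>A + A'\<close> is even; but cellwise the upper and lower strands are
  warp \<open>i0\<close> and the crossing weft, so \<open>A + A'\<close> is \<open>n/2\<close> or \<open>3n/2\<close>, which is odd.\<close>
lemma pattern_not_isonemal:
  assumes "thin_striping col" and colg: "\<forall>s. col (strandmap g s) = (col s \<noteq> E)"
    and e: "e = 1 \<or> e = -1"
    and gwarp: "strandmap g (Warp i0) = Weft j0"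
    and gweft: "\<And>j. strandmap g (Weft j) = Warp (i0 - e * (j - j0))"
    and rot: "\<And>i j. D (i0 - e * (j - j0), j0 + e * (i - i0)) = D (i, j)"
    and n: "n = 2 * m" "odd m"
    and per: "\<And>x j. D (x + int n, j) = D (x, j)"
  shows "\<not> isonemal (pattern D col)"
proof
  assume iso: "isonemal (pattern D col)"
  define P where "P = pattern D col"
  obtain p q where cw: "\<And>i. col (Warp i) = (even i = p)" and cf: "\<And>j. col (Weft j) = (even j = q)"
    using assms(1) unfolding thin_striping_def by blast
  have P: "P (i, j) = (if D (i, j) then col (Warp i) else col (Weft j))" for i j
    by (simp add: P_def pattern_def upper_def)
  have "0 < n" using n by (auto intro: odd_pos)
  have Pper: "\<forall>x. P (x + int n, j0) = P (x, j0)"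
    using per cw n by (simp add: P)
  obtain h where "h \<in> G1 P" and hwarp: "strandmap h (Warp i0) = Weft j0"
    using iso unfolding isonemal_def P_def by blast
  then have h: "is_sym P h" by (simp add: G1_def)
  have h11: "m11 h = 0" using hwarp by (auto split: if_splits)
  then have "m22 h = 0" "\<bar>m12 h\<bar> = 1" using h unfolding is_sym_def grid_iso_def by auto
  moreover have "m21 h * i0 + t2 h = j0" using hwarp h11 by simp
  ultimately have hP: "P (m12 h * k + t1 h, j0) = (P (i0, k) \<noteq> (\<not> rev h))" for k
    using is_sym_cellmap[OF h, of "(i0, k)"] h11 by (simp add: cellmap_def)
  have gP: "P (- e * k + (i0 + e * j0), j0)
      = ((if D (i0, k) then col (Weft k) else col (Warp i0)) \<noteq> E)" for k
  proof -
    have "D (- e * k + (i0 + e * j0), j0) = D (i0, k)"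
      using rot[where i = i0 and j = k] by (simp add: algebra_simps)
    moreover have "strandmap g (Weft k) = Warp (- e * k + (i0 + e * j0))"
      using gweft[of k] by (simp add: algebra_simps)
    then have "col (Warp (- e * k + (i0 + e * j0))) = (col (Weft k) \<noteq> E)"
      using colg by metis
    moreover have "col (Weft j0) = (col (Warp i0) \<noteq> E)" using colg gwarp by metis
    ultimately show ?thesis by (simp add: P)
  qed
  define C where "C = count_below n (\<lambda>x. P (x, j0))"
  define A where "A = count_below n (\<lambda>k. P (i0, k))"
  define A' where "A' = count_below n (\<lambda>k. if D (i0, k) then col (Weft k) else col (Warp i0))"
  have "count_below n (\<lambda>x. P (x, j0)) = count_below n (\<lambda>k. P (m12 h * k + t1 h, j0))"
    using count_below_affine[OF \<open>\<bar>m12 h\<bar> = 1\<close> \<open>0 < n\<close> Pper] by simp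
  also have "\<dots> = (if \<not> rev h then int n - A else A)"
    unfolding A_def by (rule count_below_xor) (rule hP)
  finally have via_h: "count_below n (\<lambda>x. P (x, j0)) = (if \<not> rev h then int n - A else A)" .
  have "count_below n (\<lambda>x. P (x, j0))
      = count_below n (\<lambda>k. P (- e * k + (i0 + e * j0), j0))"
    using count_below_affine[of "- e", OF _ \<open>0 < n\<close> Pper] e by auto
  also have "\<dots> = (if E then int n - A' else A')"
    unfolding A'_def by (rule count_below_xor) (rule gP)
  finally have via_g: "count_below n (\<lambda>x. P (x, j0)) = (if E then int n - A' else A')" .
  have "A = C \<or> A = int n - C" "A' = C \<or> A' = int n - C"
    using via_h via_g by (auto simp: C_def split: if_splits)
  then have "even (A + A')"
    using n by (elim disjE) presburger+
  moreover have "A + A' = int m + (if col (Warp i0) then int n else 0)"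
    using count_below_swap[of n "\<lambda>k. D (i0, k)" "\<lambda>_. col (Warp i0)" "\<lambda>k. col (Weft k)"]
      count_below_alternating[of m q] n cf
    by (simp add: A_def A'_def P count_below_def)
  ultimately show False
    using n by (auto split: if_splits)
qed

theorem theorem3p3:
  fixes D :: design and col :: "strand \<Rightarrow> bool" and n :: nat
  assumes "fabric D" and "isonemal D" and "periodic D"
    and "has_order D n" and "n > 4"
    and "\<exists>g\<in>G1 D. quarter_turn g"
    and "thin_striping col" and "perfect D col"
  shows "\<not> (isonemal (pattern D col) \<and> falls_apart (pattern D col))"
proof -
  obtain g where g: "g \<in> G1 D" "quarter_turn g" using assms(6) by blast
  obtain E where colg: "\<forall>s. col (strandmap g s) = (col s \<noteq> E)"
    using perfect_colour_flip[OF assms(8) g(1)] by blast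
  obtain e i0 j0 where e: "e = 1 \<or> e = -1"
    and cell: "\<And>i j. cellmap g (i, j) = (i0 - e * (j - j0), j0 + e * (i - i0))"
    and warp: "\<And>i. strandmap g (Warp i) = Weft (j0 + e * (i - i0))"
    and weft: "\<And>j. strandmap g (Weft j) = Warp (i0 - e * (j - j0))"
    using quarter_turn_centre[OF g(2) thin_striping_translation_parity[OF assms(7) colg]] by blast
  have rot: "D (i0 - e * (j - j0), j0 + e * (i - i0)) = D (i, j)" for i j
    using quarter_turn_sym_design[OF _ g(2) cell] g(1) by (simp add: G1_def)
  have "even n" using order_even[OF assms(3,4,7,8)] .
  then obtain m where n: "n = 2 * m" by blast
  have "\<not> 4 dvd int n"
    using order_not_dvd_4[OF assms(2,3,4) _ assms(7,8) e rot] assms(5) by simp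
  then have "odd m" using n by (auto elim!: evenE)
  have "D (x + int n, j) = D (x, j)" for x j
    using has_order_updown(2)[OF assms(3,4), of "Weft j" x] by simp
  moreover have "strandmap g (Warp i0) = Weft j0"
    using warp[of i0] by (simp del: strandmap.simps)
  ultimately have "\<not> isonemal (pattern D col)"
    using pattern_not_isonemal[OF assms(7) colg e _ weft rot n \<open>odd m\<close>] by blast
  then show ?thesis by blast
qed

end
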